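(* In the conditional setting described in the context, fix $\mathbf x\in\mathcal X$ and assume A1$''$, A2 and A3. Suppose there exist a fixed subset $\mathcal K^*\subseteq\{1,\dots,K\}$ and a constant $\delta>0$ such that $\inf_{\mathbf w\in\mathcal W^*}\sum_{k\in\mathcal K^*}w_k\ge\frac12+\delta$ and $$\limsup_{n\to\infty}\Pr\Big(\bigcup_{k\in\mathcal K^*}\{Y_{\mathbf x}\notin\mathcal C_k(\mathbf x;\mathcal D_n)\}\Big)\le\alpha.$$ Then $\liminf_{n\to\infty}\Pr\big(Y_{\mathbf x}\in\mathcal C_{\mathrm{comb}}(\mathbf x;\mathcal D_n)\big)\ge1-\alpha$.
   Context: Conditional setting: fix $K\ge2$ and $\alpha\in(0,1)$. For each $n$, on a common probability space there is a random data set $\mathcal D_n$. For each $k\in\{1,\dots,K\}$ and each $\mathbf x\in\mathcal X\subseteq\mathbb R^p$, $\mathcal C_k(\mathbf x;\mathcal D_n)\subseteq\mathbb R$ is a prediction set determined by $\mathcal D_n$ and $\mathbf x$. For a fixed test covariate value $\mathbf x$, $Y_{\mathbf x}$ denotes a real random variable distributed as the conditional law of the response given covariate $\mathbf x$, independent of $\mathcal D_n$; conditioning on $\{\mathbf X=\mathbf x\}$ means evaluating at $\mathbf x$ with response $Y_{\mathbf x}$. The events $\{Y_{\mathbf x}\in\mathcal C_k(\mathbf x;\mathcal D_n)\}$ are assumed measurable. Let $\Delta^{K-1}=\{\mathbf w\in[0,1]^K:w_k\ge0,\sum_k w_k=1\}$, let $\widehat{\mathbf w}_n=(\widehat w_{n,1},\dots,\widehat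 w_{n,K})$ be a $\sigma(\mathcal D_n)$-measurable random vector in $\Delta^{K-1}$, and let $\mathcal W^*\subseteq\Delta^{K-1}$ be a nonempty closed convex set; $\|\cdot\|$ is the Euclidean norm. A1$''$: $\sup_{k\in\{1,\dots,K\}}\big|\Pr(Y_{\mathbf x}\notin\mathcal C_k(\mathbf x;\mathcal D_n)\mid\mathcal D_n)-\alpha\big|\to0$ in probability as $n\to\infty$. A2: $\inf_{\mathbf w\in\mathcal W^*}\|\widehat{\mathbf w}_n-\mathbf w\|\to0$ in probability as $n\to\infty$. A3: $\mathcal C_{\mathrm{comb}}(\mathbf x;\mathcal D_n):=\{y\in\mathbb R:\sum_{k=1}^K\widehat w_{n,k}\mathbf 1\{y\in\mathcal C_k(\mathbf x;\mathcal D_n)\}>1/2\}$. *)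

theory Defs
  imports "HOL-Probability.Probability"
begin

definition prob_simplex :: "(real ^ 'k::finite) set" where
  "prob_simplex = {w. (\<forall>k. w $ k \<ge> 0) \<and> (\<Sum>k\<in>UNIV. w $ k) = 1}"

definition conv_in_prob :: "'a measure \<Rightarrow> (nat \<Rightarrow> 'a \<Rightarrow> real) \<Rightarrow> real \<Rightarrow> bool" where
  "conv_in_prob M X c \<longleftrightarrow>
     (\<forall>e>0. (\<lambda>n. measure M {\<omega>\<in>space M. \<bar>X n \<omega> - c\<bar> > e}) \<longlonglongrightarrow> 0)"

definition C_comb :: "(real ^ 'k::finite) \<Rightarrow> ('k \<Rightarrow> real set) \<Rightarrow> real set" where
  "C_comb w C = {y. (\<Sum>k\<in>UNIV. w $ k * indicator (C k) y) > 1/2}"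

end

theory Submission
  imports Defs
begin

text \<open>
  Once the weights are within distance \<open>\<delta> / (card K\<^sup>* + 1)\<close> of \<open>W\<^sup>*\<close>, the
  members of \<open>K\<^sup>*\<close> carry more than half of the total weight, so every \<open>y\<close> covered
  by all the sets \<open>C\<^sub>k\<close>, \<open>k \<in> K\<^sup>*\<close>, wins the weighted majority vote. Hence the
  combined set misses \<open>Y\<close> only if some \<open>C\<^sub>k\<close> with \<open>k \<in> K\<^sup>*\<close> does, or the weights are
  still far from \<open>W\<^sup>*\<close>. By the union bound, \<open>P(Y \<notin> C_comb)\<close> is at most the
  probability of the first event, whose limsup is at most \<open>\<alpha>\<close>, plus that of the second,
  which vanishes by A2.
\<close>

lemma abs_sum_components_diff_le_dist:
  fixes v w :: "real ^ 'k::finite"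
  shows "\<bar>(\<Sum>k\<in>Ks. v $ k) - (\<Sum>k\<in>Ks. w $ k)\<bar> \<le> real (card Ks) * dist v w"
proof -
  have "\<bar>(\<Sum>k\<in>Ks. v $ k) - (\<Sum>k\<in>Ks. w $ k)\<bar> \<le> (\<Sum>k\<in>Ks. \<bar>v $ k - w $ k\<bar>)"
    by (metis sum_subtractf sum_abs)
  also have "\<dots> \<le> (\<Sum>k\<in>Ks. dist v w)"
    by (intro sum_mono) (metis component_le_norm_cart dist_norm vector_minus_component)
  finally show ?thesis by simp
qed

lemma infdist_less_imp_ex_dist_less:
  assumes "A \<noteq> {}" "infdist x A < e"
  shows "\<exists>a\<in>A. dist x a < e"
proof -
  have "bdd_below ((\<lambda>a. dist x a) ` A)"
    by (rule bdd_belowI2[where m=0]) simp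
  then show ?thesis
    using assms by (simp add: infdist_notempty cINF_less_iff)
qed

lemma sum_components_gt_half_if_infdist_small:
  fixes w :: "real ^ 'k::finite" and Wstar :: "(real ^ 'k) set"
  assumes "Wstar \<noteq> {}"
    and margin: "\<And>v. v \<in> Wstar \<Longrightarrow> 1/2 + \<delta> \<le> (\<Sum>k\<in>Ks. v $ k)"
    and close: "real (card Ks) * infdist w Wstar < \<delta>"
  shows "1/2 < (\<Sum>k\<in>Ks. w $ k)"
proof -
  obtain v where v: "v \<in> Wstar" "real (card Ks) * dist v w < \<delta>"
  proof (cases "card Ks = 0")
    case True
    then show ?thesis using that \<open>Wstar \<noteq> {}\<close> close by auto
  next
    case False
    then have pos: "0 < real (card Ks)" by auto
    then have "infdist w Wstar < \<delta> / real (card Ks)"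
      by (metis close mult.commute pos_less_divide_eq)
    then obtain v where "v \<in> Wstar" "dist w v < \<delta> / real (card Ks)"
      using infdist_less_imp_ex_dist_less[OF \<open>Wstar \<noteq> {}\<close>] by blast
    then show ?thesis
      using that pos by (metis dist_commute mult.commute pos_less_divide_eq)
  qed
  show ?thesis
    using margin[OF v(1)] v(2) abs_sum_components_diff_le_dist[of v Ks w] by linarith
qed

lemma mem_C_comb_if_covered_by_majority:
  fixes w :: "real ^ 'k::finite"
  assumes "\<And>k. 0 \<le> w $ k" and "1/2 < (\<Sum>k\<in>Ks. w $ k)" and "\<And>k. k \<in> Ks \<Longrightarrow> y \<in> Cs k"
  shows "y \<in> C_comb w Cs"
proof -
  have "(\<Sum>k\<in>Ks. w $ k) = (\<Sum>k\<in>Ks. w $ k * indicator (Cs k) y)"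
    using assms(3) by (intro sum.cong) auto
  also have "\<dots> \<le> (\<Sum>k\<in>UNIV. w $ k * indicator (Cs k) y)"
    using assms(1) by (intro sum_mono2) auto
  finally show ?thesis using assms(2) by (simp add: C_comb_def)
qed

lemma mem_C_comb_if_near_majority_weights:
  fixes w :: "real ^ 'k::finite" and Wstar :: "(real ^ 'k) set"
  assumes "w \<in> prob_simplex" "Wstar \<noteq> {}" "Wstar \<subseteq> prob_simplex"
    and margin: "1/2 + \<delta> \<le> (INF v\<in>Wstar. \<Sum>k\<in>Ks. v $ k)" and "0 < \<delta>"
    and close: "infdist w Wstar \<le> \<delta> / (real (card Ks) + 1)"
    and "\<And>k. k \<in> Ks \<Longrightarrow> y \<in> Cs k"
  shows "y \<in> C_comb w Cs"
proof -
  have "bdd_below ((\<lambda>v. \<Sum>k\<in>Ks. v $ k) ` Wstar)"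
    using \<open>Wstar \<subseteq> prob_simplex\<close>
    by (intro bdd_belowI2[where m=0] sum_nonneg) (auto simp: prob_simplex_def)
  then have margin_at: "1/2 + \<delta> \<le> (\<Sum>k\<in>Ks. v $ k)" if "v \<in> Wstar" for v
    using margin cINF_lower[OF _ that] by (meson order_trans)
  have "real (card Ks) * infdist w Wstar \<le> real (card Ks) * (\<delta> / (real (card Ks) + 1))"
    using close by (intro mult_left_mono) auto
  also have "\<dots> < \<delta>"
    using \<open>0 < \<delta>\<close> by (simp add: field_simps)
  finally have "real (card Ks) * infdist w Wstar < \<delta>" .
  with margin_at have "1/2 < (\<Sum>k\<in>Ks. w $ k)"
    by (rule sum_components_gt_half_if_infdist_small[OF \<open>Wstar \<noteq> {}\<close>])
  then show ?thesis
    using assms(1,7) by (auto simp: prob_simplex_def intro: mem_C_comb_if_covered_by_majority)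
qed

lemma (in prob_space) prob_ge_one_minus_union_bound:
  assumes "A \<in> events" "B \<in> events" "G \<in> events" "space M - (A \<union> B) \<subseteq> G"
  shows "1 - prob A - prob B \<le> prob G"
proof -
  have "1 - prob A - prob B \<le> 1 - prob (A \<union> B)"
    using measure_Un_le[OF assms(1,2)] by linarith
  also have "\<dots> = prob (space M - (A \<union> B))"
    using prob_compl[OF sets.Un[OF assms(1,2)]] by simp
  also have "\<dots> \<le> prob G"
    using finite_measure_mono[OF assms(4,3)] .
  finally show ?thesis .
qed

lemma liminf_ge_one_minus_limsup:
  fixes g u b :: "nat \<Rightarrow> real"
  assumes lower: "\<And>n. 1 - u n - b n \<le> g n"
    and u: "limsup (\<lambda>n. ereal (u n)) \<le> ereal \<alpha>"
    and b: "b \<longlonglongrightarrow> 0"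
  shows "ereal (1 - \<alpha>) \<le> liminf (\<lambda>n. ereal (g n))"
  unfolding le_Liminf_iff
proof (intro allI impI)
  fix y assume "y < ereal (1 - \<alpha>)"
  then obtain r where r: "y < ereal r" "r < 1 - \<alpha>"
    using ereal_dense2 by fastforce
  define \<epsilon> where "\<epsilon> = 1 - \<alpha> - r"
  have "\<epsilon> > 0" using r by (simp add: \<epsilon>_def)
  have "limsup (\<lambda>n. ereal (u n)) < ereal (\<alpha> + \<epsilon>/2)"
    using u \<open>\<epsilon> > 0\<close> by (simp add: le_less_trans)
  then have "eventually (\<lambda>n. u n < \<alpha> + \<epsilon>/2) sequentially"
    by (auto dest: Limsup_lessD)
  moreover have "eventually (\<lambda>n. b n < \<epsilon>/2) sequentially"
    using order_tendstoD(2)[OF b, of "\<epsilon>/2"] \<open>\<epsilon> > 0\<close> by simp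
  ultimately show "eventually (\<lambda>n. y < ereal (g n)) sequentially"
  proof eventually_elim
    case (elim n)
    then have "r < g n" using lower[of n] by (simp add: \<epsilon>_def field_simps)
    then show ?case using r(1) by (simp add: less_trans)
  qed
qed

lemma (in prob_space) liminf_prob_ge_of_cover:
  assumes "\<And>n. U n \<in> events" "\<And>n. B n \<in> events" "\<And>n. G n \<in> events"
    and "\<And>n. space M - (U n \<union> B n) \<subseteq> G n"
    and "limsup (\<lambda>n. ereal (prob (U n))) \<le> ereal \<alpha>" and "(\<lambda>n. prob (B n)) \<longlonglongrightarrow> 0"
  shows "ereal (1 - \<alpha>) \<le> liminf (\<lambda>n. ereal (prob (G n)))"
  using prob_ge_one_minus_union_bound assms by (intro liminf_ge_one_minus_limsup) auto

lemma measurable_event_section: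
  assumes "D \<in> M \<rightarrow>\<^sub>M DS" "Y \<in> borel_measurable M" "{(d, y). y \<in> S d} \<in> sets (DS \<Otimes>\<^sub>M borel)"
  shows "{\<omega>\<in>space M. Y \<omega> \<in> S (D \<omega>)} \<in> sets M"
proof -
  have "{\<omega>\<in>space M. Y \<omega> \<in> S (D \<omega>)} = (\<lambda>\<omega>. (D \<omega>, Y \<omega>)) -` {(d, y). y \<in> S d} \<inter> space M"
    by auto
  also have "\<dots> \<in> sets M"
    using assms by (intro measurable_sets[OF measurable_Pair]) auto
  finally show ?thesis .
qed

lemma measurable_event_C_comb:
  fixes C :: "'k::finite \<Rightarrow> 'd \<Rightarrow> real set" and W :: "'d \<Rightarrow> real ^ 'k"
  assumes D[measurable]: "D \<in> M \<rightarrow>\<^sub>M DS" and Y: "Y \<in> borel_measurable M"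
    and C: "\<And>k. {(d, y). y \<in> C k d} \<in> sets (DS \<Otimes>\<^sub>M borel)"
    and W[measurable]: "W \<in> borel_measurable DS"
  shows "{\<omega>\<in>space M. Y \<omega> \<in> C_comb (W (D \<omega>)) (\<lambda>k. C k (D \<omega>))} \<in> sets M"
proof -
  have [measurable]: "(\<lambda>\<omega>. W (D \<omega>) $ k) \<in> borel_measurable M" for k
    by (rule measurable_compose[OF _ borel_measurable_nth]) measurable
  have [measurable]: "{\<omega>\<in>space M. Y \<omega> \<in> C k (D \<omega>)} \<in> sets M" for k
    using measurable_event_section[OF D Y C] .
  show ?thesis
    unfolding C_comb_def mem_Collect_eq by measurable
qed

theorem theorem4:
  fixes M :: "'a measure" and DS :: "'d measure"
    and D :: "nat \<Rightarrow> 'a \<Rightarrow> 'd" and Y :: "'a \<Rightarrow> real"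
    and C :: "'k::finite \<Rightarrow> 'x \<Rightarrow> 'd \<Rightarrow> real set"
    and W :: "nat \<Rightarrow> 'd \<Rightarrow> real ^ 'k"
    and Wstar :: "(real ^ 'k) set" and Ks :: "'k set"
    and X :: "'x set" and x :: 'x and \<alpha> \<delta> :: real
  assumes M: "prob_space M"
    and K2: "CARD('k) \<ge> 2"
    and alpha: "0 < \<alpha>" "\<alpha> < 1"
    and x: "x \<in> X"
    and D_meas: "\<And>n. D n \<in> M \<rightarrow>\<^sub>M DS"
    and Y_meas: "Y \<in> borel_measurable M"
    and indep: "\<And>n. prob_space.indep_set M (sets (vimage_algebra (space M) (D n) DS)) (sets (vimage_algebra (space M) Y borel))"
    and C_meas: "\<And>k. {(d, y). y \<in> C k x d} \<in> sets (DS \<Otimes>\<^sub>M borel)"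
    and W_meas: "\<And>n. W n \<in> borel_measurable DS"
    and W_simplex: "\<And>n \<omega>. \<omega> \<in> space M \<Longrightarrow> W n (D n \<omega>) \<in> prob_simplex"
    and Wstar: "Wstar \<noteq> {}" "closed Wstar" "convex Wstar" "Wstar \<subseteq> prob_simplex"
    and A1: "conv_in_prob M
               (\<lambda>n \<omega>. Max (range (\<lambda>k. \<bar>measure M {\<omega>'\<in>space M. Y \<omega>' \<notin> C k x (D n \<omega>)} - \<alpha>\<bar>))) 0"
    and A2: "conv_in_prob M (\<lambda>n \<omega>. infdist (W n (D n \<omega>)) Wstar) 0"
    and delta: "\<delta> > 0"
    and Kstar: "(INF w\<in>Wstar. (\<Sum>k\<in>Ks. w $ k)) \<ge> 1/2 + \<delta>"
    and union_cov: "limsup (\<lambda>n. ereal (measure M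
               {\<omega>\<in>space M. \<exists>k\<in>Ks. Y \<omega> \<notin> C k x (D n \<omega>)})) \<le> ereal \<alpha>"
  shows "liminf (\<lambda>n. ereal (measure M
               {\<omega>\<in>space M. Y \<omega> \<in> C_comb (W n (D n \<omega>)) (\<lambda>k. C k x (D n \<omega>))}))
           \<ge> ereal (1 - \<alpha>)"
proof -
  interpret prob_space M by (rule M)
  define \<eta> where "\<eta> = \<delta> / (real (card Ks) + 1)"
  define U where "U n = {\<omega>\<in>space M. \<exists>k\<in>Ks. Y \<omega> \<notin> C k x (D n \<omega>)}" for n
  define B where "B n = {\<omega>\<in>space M. \<bar>infdist (W n (D n \<omega>)) Wstar - 0\<bar> > \<eta>}" for n
  define G where "G n = {\<omega>\<in>space M. Y \<omega> \<in> C_comb (W n (D n \<omega>)) (\<lambda>k. C k x (D n \<omega>))}" for n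
  have [measurable]: "{\<omega>\<in>space M. Y \<omega> \<in> C k x (D n \<omega>)} \<in> sets M" for k n
    using measurable_event_section[OF D_meas Y_meas C_meas] .
  have "(\<lambda>w. infdist w Wstar) \<in> borel_measurable borel"
    by (intro borel_measurable_continuous_onI continuous_intros)
  then have [measurable]: "(\<lambda>\<omega>. infdist (W n (D n \<omega>)) Wstar) \<in> borel_measurable M" for n
    using D_meas W_meas by measurable
  have "U n \<in> events" "B n \<in> events" for n
    unfolding U_def B_def by measurable
  moreover have "G n \<in> events" for n
    unfolding G_def by (rule measurable_event_C_comb[OF D_meas Y_meas C_meas W_meas])
  moreover have "space M - (U n \<union> B n) \<subseteq> G n" for n
    by (auto simp: U_def B_def G_def \<eta>_def not_less infdist_nonneg
        intro!: mem_C_comb_if_near_majority_weights[OF W_simplex Wstar(1,4) Kstar delta])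
  moreover have "limsup (\<lambda>n. ereal (prob (U n))) \<le> ereal \<alpha>"
    using union_cov by (simp add: U_def)
  moreover have "(\<lambda>n. prob (B n)) \<longlonglongrightarrow> 0"
    using A2 delta unfolding conv_in_prob_def B_def \<eta>_def by simp
  ultimately have "ereal (1 - \<alpha>) \<le> liminf (\<lambda>n. ereal (prob (G n)))"
    by (rule liminf_prob_ge_of_cover)
  then show ?thesis
    by (simp add: G_def)
qed

end
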